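(* Let $X$ be a complex Banach space and $T:X\to X$ a uniformly rigid bounded linear operator. Then $\sigma(T)\subseteq\mathbb T=\{z\in\mathbb C:|z|=1\}$. In particular, $T$ is invertible.
   Context: $T$ is called uniformly rigid if there is an increasing sequence of positive integers $(k_n)$ with $\|T^{k_n}-I\|\to 0$. *)

theory Defs
  imports "HOL-Analysis.Analysis"
begin

class complex_normed_vector = real_normed_vector +
  fixes scaleC :: "complex \<Rightarrow> 'a \<Rightarrow> 'a" (infixr \<open>*\<^sub>C\<close> 75)
  assumes scaleC_add_right: "a *\<^sub>C (x + y) = a *\<^sub>C x + a *\<^sub>C y"
    and scaleC_add_left: "(a + b) *\<^sub>C x = a *\<^sub>C x + b *\<^sub>C x"
    and scaleC_scaleC: "a *\<^sub>C (b *\<^sub>C x) = (a * b) *\<^sub>C x"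
    and scaleC_one: "1 *\<^sub>C x = x"
    and scaleR_scaleC: "scaleR r x = complex_of_real r *\<^sub>C x"
    and norm_scaleC: "norm (a *\<^sub>C x) = cmod a * norm x"

class complex_banach = complex_normed_vector + complete_space

text \<open>Bounded operators are elements of the type of bounded (real-)linear maps,
  required additionally to be complex-linear.\<close>

definition clinear_op :: "('a::complex_normed_vector \<Rightarrow>\<^sub>L 'a) \<Rightarrow> bool" where
  "clinear_op T \<longleftrightarrow> (\<forall>c x. T (c *\<^sub>C x) = c *\<^sub>C T x)"

definition op_pow :: "('a::real_normed_vector \<Rightarrow>\<^sub>L 'a) \<Rightarrow> nat \<Rightarrow> ('a \<Rightarrow>\<^sub>L 'a)" where
  "op_pow T n = ((\<lambda>S. T o\<^sub>L S) ^^ n) id_blinfun"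

definition uniformly_rigid :: "('a::real_normed_vector \<Rightarrow>\<^sub>L 'a) \<Rightarrow> bool" where
  "uniformly_rigid T \<longleftrightarrow>
     (\<exists>k::nat \<Rightarrow> nat. strict_mono k \<and> 0 < k 0 \<and>
        (\<lambda>n. norm (op_pow T (k n) - id_blinfun)) \<longlonglongrightarrow> 0)"

definition invertible_op :: "('a::real_normed_vector \<Rightarrow>\<^sub>L 'a) \<Rightarrow> bool" where
  "invertible_op A \<longleftrightarrow> (\<exists>B. B o\<^sub>L A = id_blinfun \<and> A o\<^sub>L B = id_blinfun)"

definition spectrum :: "('a::complex_normed_vector \<Rightarrow>\<^sub>L 'a) \<Rightarrow> complex set" where
  "spectrum T = {z. \<not> (\<exists>S. bounded_linear S \<and>
      (\<forall>x. S (z *\<^sub>C x - T x) = x) \<and> (\<forall>y. z *\<^sub>C S y - T (S y) = y))}"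

end

theory Submission
  imports Defs
begin

text \<open>Let \<open>|z| \<noteq> 1\<close>. Since \<open>\<parallel>T\<^sup>k\<^sub>n - I\<parallel> \<rightarrow> 0\<close> while \<open>|z\<^sup>K - 1| \<ge> \<bar>|z| - 1\<bar> > 0\<close> for every \<open>K \<ge> 1\<close>,
  some \<open>K = k\<^sub>n\<close> gives \<open>\<parallel>T\<^sup>K - I\<parallel> < |z\<^sup>K - 1|\<close>, so
  \<open>z\<^sup>K - T\<^sup>K = (z\<^sup>K - 1) I - (T\<^sup>K - I)\<close> is invertible by the contraction mapping principle.
  But \<open>z\<^sup>K - T\<^sup>K = P (z - T) = (z - T) P\<close> with \<open>P = \<Sum>\<^sub>j\<^sub><\<^sub>K z\<^sup>K\<^sup>-\<^sup>1\<^sup>-\<^sup>j T\<^sup>j\<close>, and a factor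
  commuting with an invertible operator is itself invertible. Hence \<open>z \<notin> \<sigma>(T)\<close>; taking \<open>z = 0\<close>
  shows that \<open>T\<close> is invertible.\<close>

context complex_normed_vector
begin

lemma scaleC_zero_left [simp]: "0 *\<^sub>C x = 0"
  using scaleC_add_left[of 0 0 x] by simp

lemma scaleC_zero_right [simp]: "a *\<^sub>C 0 = 0"
  using scaleC_add_right[of a 0 0] by simp

lemma scaleC_minus_right: "a *\<^sub>C (- x) = - (a *\<^sub>C x)"
  using scaleC_add_right[of a "- x" x] by (simp add: eq_neg_iff_add_eq_0)

lemma scaleC_diff_right: "a *\<^sub>C (x - y) = a *\<^sub>C x - a *\<^sub>C y"
  using scaleC_add_right[of a x "- y"] by (simp add: scaleC_minus_right)

lemma scaleC_minus_left: "(- a) *\<^sub>C x = - (a *\<^sub>C x)"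
  using scaleC_add_left[of "- a" a x] by (simp add: eq_neg_iff_add_eq_0)

lemma scaleC_diff_left: "(a - b) *\<^sub>C x = a *\<^sub>C x - b *\<^sub>C x"
  using scaleC_add_left[of a "- b" x] by (simp add: scaleC_minus_left)

lemma scaleC_cancel_left: "a \<noteq> 0 \<Longrightarrow> a *\<^sub>C x = a *\<^sub>C y \<longleftrightarrow> x = y"
  by (metis scaleC_scaleC scaleC_one left_inverse)

end

lemma bounded_linear_scaleC: "bounded_linear (\<lambda>x::'a::complex_normed_vector. c *\<^sub>C x)"
proof (rule bounded_linear_intro[where K = "cmod c"])
  show "c *\<^sub>C (x + y) = c *\<^sub>C x + c *\<^sub>C y" for x y
    by (simp add: scaleC_add_right)
  show "c *\<^sub>C (r *\<^sub>R x) = r *\<^sub>R (c *\<^sub>C x)" for r x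
    by (simp add: scaleR_scaleC scaleC_scaleC mult.commute)
  show "norm (c *\<^sub>C x) \<le> norm x * cmod c" for x
    by (simp add: norm_scaleC mult.commute)
qed

lemma bounded_linear_inverse_near_id:
  fixes f :: "'a::{real_normed_vector, complete_space} \<Rightarrow> 'a"
  assumes "bounded_linear f" and q: "0 \<le> q" "q < 1"
    and near_id: "\<And>x. norm (f x - x) \<le> q * norm x"
  obtains g where "bounded_linear g" "\<And>x. g (f x) = x" "\<And>y. f (g y) = y"
proof -
  interpret f: bounded_linear f by fact
  have lower: "(1 - q) * norm x \<le> norm (f x)" for x
    using norm_triangle_ineq2[of x "f x"] near_id[of x]
    by (simp add: norm_minus_commute algebra_simps)
  have "inj f"
  proof (rule injI)
    fix x y assume "f x = f y"
    then have "(1 - q) * norm (x - y) \<le> 0"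
      using lower[of "x - y"] by (simp add: f.diff)
    with q show "x = y" by (simp add: mult_le_0_iff)
  qed
  have "f x = y" if "x - f x + y = x" for x y
    using that by (simp add: algebra_simps)
  moreover have "\<exists>x. x - f x + y = x" for y
  proof (rule banach_fix_type[OF q, THEN ex1_implies_ex], intro allI)
    \<comment> \<open>\<open>x \<mapsto> x - f x + y\<close> is a contraction whose fixed point solves \<open>f x = y\<close>\<close>
    fix x x'
    show "dist (x - f x + y) (x' - f x' + y) \<le> q * dist x x'"
      using near_id[of "x - x'"]
      by (simp add: dist_norm f.diff norm_minus_commute algebra_simps)
  qed
  ultimately have "surj f" by (metis surjI)
  define g where "g = inv f"
  have gf: "g (f x) = x" for x
    using \<open>inj f\<close> by (simp add: g_def)
  have fg: "f (g y) = y" for y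
    using \<open>surj f\<close> by (simp add: g_def surj_f_inv_f)
  have "bounded_linear g"
  proof (rule bounded_linear_intro[where K = "1 / (1 - q)"])
    show "g (x + y) = g x + g y" for x y by (metis f.add fg gf)
    show "g (r *\<^sub>R x) = r *\<^sub>R g x" for r x by (metis f.scale fg gf)
    show "norm (g x) \<le> norm x * (1 / (1 - q))" for x
      using lower[of "g x"] q by (simp add: fg field_simps)
  qed
  then show thesis using gf fg by (rule that)
qed

lemma bounded_linear_inverse_scaleC_minus:
  fixes E :: "'a::complex_banach \<Rightarrow>\<^sub>L 'a"
  assumes small: "norm E < cmod c"
  obtains g where "bounded_linear g"
    "\<And>x. g (c *\<^sub>C x - E x) = x" "\<And>y. c *\<^sub>C g y - E (g y) = y"
proof -
  have "c \<noteq> 0" using small by auto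
  define f where "f x = (1 / c) *\<^sub>C (c *\<^sub>C x - E x)" for x
  have f_eq: "f x = x - (1 / c) *\<^sub>C E x" for x
    using \<open>c \<noteq> 0\<close> by (simp add: f_def scaleC_diff_right scaleC_scaleC scaleC_one)
  have "bounded_linear f"
    unfolding f_def
    by (intro bounded_linear_compose[OF bounded_linear_scaleC] bounded_linear_sub
        bounded_linear_scaleC blinfun.bounded_linear_right)
  moreover have "0 \<le> norm E / cmod c" "norm E / cmod c < 1"
    using small \<open>c \<noteq> 0\<close> by (simp_all add: divide_less_eq)
  moreover have "norm (f x - x) \<le> norm E / cmod c * norm x" for x
    using norm_blinfun[of E x] \<open>c \<noteq> 0\<close>
    by (simp add: f_eq norm_scaleC norm_divide divide_right_mono)
  ultimately obtain h where h: "bounded_linear h" "\<And>x. h (f x) = x" "\<And>y. f (h y) = y"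
    by (rule bounded_linear_inverse_near_id) blast
  show thesis
  proof (rule that[of "\<lambda>y. h ((1 / c) *\<^sub>C y)"])
    show "bounded_linear (\<lambda>y. h ((1 / c) *\<^sub>C y))"
      using bounded_linear_compose[OF h(1) bounded_linear_scaleC] .
    show "h ((1 / c) *\<^sub>C (c *\<^sub>C x - E x)) = x" for x
      using h(2) by (simp add: f_def)
    show "c *\<^sub>C h ((1 / c) *\<^sub>C y) - E (h ((1 / c) *\<^sub>C y)) = y" for y
      using h(3)[of "(1 / c) *\<^sub>C y"] \<open>c \<noteq> 0\<close> by (simp add: f_def scaleC_cancel_left)
  qed
qed

lemma inverse_of_commuting_factor:
  assumes "bounded_linear P" "bounded_linear g"
    and left: "\<And>x. W x = P (A x)" and right: "\<And>x. W x = A (P x)"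
    and "\<And>x. g (W x) = x" "\<And>y. W (g y) = y"
  shows "\<exists>S. bounded_linear S \<and> (\<forall>x. S (A x) = x) \<and> (\<forall>y. A (S y) = y)"
proof (intro exI conjI allI)
  show "bounded_linear (P \<circ> g)"
    unfolding comp_def using assms(1,2) by (rule bounded_linear_compose)
  show A_right_inv: "A ((P \<circ> g) y) = y" for y
    using assms right by simp
  have "g (P (A x)) = x" for x
    using assms left by metis
  \<comment> \<open>left and right inverses of \<open>A\<close> coincide\<close>
  then show "(P \<circ> g) (A x) = x" for x
    by (metis A_right_inv)
qed

lemma op_pow_0 [simp]: "op_pow T 0 x = x"
  by (simp add: op_pow_def)

lemma op_pow_Suc [simp]: "op_pow T (Suc n) x = T (op_pow T n x)"
  by (simp add: op_pow_def)

lemma op_pow_commute: "op_pow T n (T x) = T (op_pow T n x)"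
  by (induction n) auto

lemma op_pow_scaleC:
  assumes "clinear_op T"
  shows "op_pow T n (c *\<^sub>C x) = c *\<^sub>C op_pow T n x"
  using assms by (induction n) (auto simp: clinear_op_def)

text \<open>\<open>geom_op z T k = \<Sum>\<^sub>j\<^sub><\<^sub>k z\<^sup>k\<^sup>-\<^sup>1\<^sup>-\<^sup>j T\<^sup>j\<close>, the cofactor in \<open>z\<^sup>k - T\<^sup>k = (z - T) geom_op z T k\<close>.\<close>

fun geom_op :: "complex \<Rightarrow> ('a::complex_normed_vector \<Rightarrow>\<^sub>L 'a) \<Rightarrow> nat \<Rightarrow> 'a \<Rightarrow> 'a" where
  "geom_op z T 0 x = 0"
| "geom_op z T (Suc k) x = z *\<^sub>C geom_op z T k x + op_pow T k x"

lemma bounded_linear_geom_op: "bounded_linear (geom_op z T k)"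
proof (induction k)
  case 0
  have "geom_op z T 0 = (\<lambda>x. 0)" by (rule ext) simp
  then show ?case by (simp add: bounded_linear_zero)
next
  case (Suc k)
  show ?case
    using bounded_linear_add[OF bounded_linear_compose[OF bounded_linear_scaleC Suc.IH]
        blinfun.bounded_linear_right[of "op_pow T k"]]
    by simp
qed

lemma geom_op_commute:
  assumes "clinear_op T"
  shows "geom_op z T k (z *\<^sub>C x - T x) = z *\<^sub>C geom_op z T k x - T (geom_op z T k x)"
proof (induction k)
  case 0
  show ?case by simp
next
  case (Suc k)
  have T_scaleC: "T (c *\<^sub>C y) = c *\<^sub>C T y" for c y
    using assms by (simp add: clinear_op_def)
  show ?case
    by (simp add: Suc.IH op_pow_scaleC[OF assms] op_pow_commute blinfun.diff_right blinfun.add_right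
        T_scaleC scaleC_diff_right scaleC_add_right algebra_simps)
qed

lemma power_minus_op_pow_factor:
  assumes "clinear_op T"
  shows "z ^ k *\<^sub>C x - op_pow T k x = geom_op z T k (z *\<^sub>C x - T x)"
proof (induction k)
  case 0
  show ?case by (simp add: scaleC_one)
next
  case (Suc k)
  have "geom_op z T (Suc k) (z *\<^sub>C x - T x)
      = z *\<^sub>C (z ^ k *\<^sub>C x - op_pow T k x) + (z *\<^sub>C op_pow T k x - op_pow T (Suc k) x)"
    by (simp add: Suc.IH op_pow_scaleC[OF assms] op_pow_commute blinfun.diff_right)
  also have "\<dots> = z ^ Suc k *\<^sub>C x - op_pow T (Suc k) x"
    by (simp add: scaleC_diff_right scaleC_scaleC)
  finally show ?case by simp
qed

lemma abs_diff_one_le_power: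
  fixes r :: real
  assumes "0 \<le> r" "1 \<le> K"
  shows "\<bar>r - 1\<bar> \<le> \<bar>r ^ K - 1\<bar>"
proof (cases "1 \<le> r")
  case True
  then show ?thesis using power_increasing[OF assms(2) True] by simp
next
  case False
  then show ?thesis using power_decreasing[OF assms(2,1)] assms by (simp add: abs_if)
qed

lemma uniformly_rigid_op_pow_close:
  assumes "uniformly_rigid T" "0 < \<epsilon>"
  obtains K where "1 \<le> K" "norm (op_pow T K - id_blinfun) < \<epsilon>"
proof -
  obtain k :: "nat \<Rightarrow> nat" where "strict_mono k" "0 < k 0"
    and "(\<lambda>n. norm (op_pow T (k n) - id_blinfun)) \<longlonglongrightarrow> 0"
    using assms(1) unfolding uniformly_rigid_def by blast
  then obtain n where "norm (op_pow T (k n) - id_blinfun) < \<epsilon>"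
    using LIMSEQ_D[OF _ assms(2)] by fastforce
  moreover have "1 \<le> k n"
    using \<open>0 < k 0\<close> strict_mono_leD[OF \<open>strict_mono k\<close>, of 0 n] by simp
  ultimately show thesis by (rule that[rotated])
qed

lemma resolvent_exists_off_unit_circle:
  fixes T :: "'a::complex_banach \<Rightarrow>\<^sub>L 'a"
  assumes cl: "clinear_op T" and "uniformly_rigid T" and "cmod z \<noteq> 1"
  shows "\<exists>S. bounded_linear S \<and> (\<forall>x. S (z *\<^sub>C x - T x) = x) \<and> (\<forall>y. z *\<^sub>C S y - T (S y) = y)"
proof -
  have "0 < \<bar>cmod z - 1\<bar>"
    using assms(3) by simp
  then obtain K where "1 \<le> K" and close: "norm (op_pow T K - id_blinfun) < \<bar>cmod z - 1\<bar>"
    by (rule uniformly_rigid_op_pow_close[OF assms(2)])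
  have "\<bar>cmod z - 1\<bar> \<le> \<bar>cmod z ^ K - 1\<bar>"
    using abs_diff_one_le_power[OF norm_ge_zero \<open>1 \<le> K\<close>] .
  also have "\<dots> \<le> cmod (z ^ K - 1)"
    using norm_triangle_ineq3[of "z ^ K" 1] by (simp add: norm_power)
  finally have "norm (op_pow T K - id_blinfun) < cmod (z ^ K - 1)"
    using close by linarith
  then obtain g where g: "bounded_linear g"
    "\<And>x. g ((z ^ K - 1) *\<^sub>C x - (op_pow T K - id_blinfun) x) = x"
    "\<And>y. (z ^ K - 1) *\<^sub>C g y - (op_pow T K - id_blinfun) (g y) = y"
    by (rule bounded_linear_inverse_scaleC_minus) blast
  have W: "(z ^ K - 1) *\<^sub>C x - (op_pow T K - id_blinfun) x = z ^ K *\<^sub>C x - op_pow T K x" for x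
    by (simp add: scaleC_diff_left scaleC_one blinfun.diff_left)
  have "z ^ K *\<^sub>C x - op_pow T K x = z *\<^sub>C geom_op z T K x - T (geom_op z T K x)" for x
    by (simp add: power_minus_op_pow_factor[OF cl] geom_op_commute[OF cl])
  from inverse_of_commuting_factor[OF bounded_linear_geom_op g(1)
      power_minus_op_pow_factor[OF cl] this g(2,3)[unfolded W]]
  show ?thesis .
qed

lemma invertible_op_if_resolvent_at_zero:
  fixes T :: "'a::complex_normed_vector \<Rightarrow>\<^sub>L 'a"
  assumes "bounded_linear S" "\<And>x. S (0 *\<^sub>C x - T x) = x" "\<And>y. 0 *\<^sub>C S y - T (S y) = y"
  shows "invertible_op T"
proof -
  interpret S: bounded_linear S by fact
  have B: "blinfun_apply (- Blinfun S) y = - S y" for y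
    using assms(1) by (simp add: uminus_blinfun.rep_eq bounded_linear_Blinfun_apply)
  have "- Blinfun S o\<^sub>L T = id_blinfun"
    using assms(2) by (intro blinfun_eqI) (simp add: B flip: S.neg)
  moreover have "T o\<^sub>L - Blinfun S = id_blinfun"
    using assms(3) by (intro blinfun_eqI) (simp add: B blinfun.minus_right)
  ultimately show ?thesis unfolding invertible_op_def by blast
qed

theorem proposition2p19:
  fixes T :: "'a::complex_banach \<Rightarrow>\<^sub>L 'a"
  assumes "clinear_op T"
    and "uniformly_rigid T"
  shows "spectrum T \<subseteq> sphere 0 1 \<and> invertible_op T"
proof
  show "spectrum T \<subseteq> sphere 0 1"
    using resolvent_exists_off_unit_circle[OF assms] unfolding spectrum_def by fastforce
  obtain S where "bounded_linear S" "\<And>x. S (0 *\<^sub>C x - T x) = x" "\<And>y. 0 *\<^sub>C S y - T (S y) = y"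
    using resolvent_exists_off_unit_circle[OF assms, of 0] by auto
  then show "invertible_op T" by (rule invertible_op_if_resolvent_at_zero)
qed

end
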